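(* Let $a$ be a positive integer and let $T_{a,a} = \{C_{i,1} : 1 \le i \le 2a+1\} \cup \{C_{a+1,j} : 2 \le j \le a+1\}$, of size $n = 3a+1$. Then on the $n \times n$ board, $\mathrm{cp}_{\mathrm{free}}(T_{a,a}) = 2$.
   Context: For integers $i,j$, $C_{i,j}$ denotes the unit square cell in column $i$ and row $j$ of the integer grid (columns numbered left to right, rows numbered top to bottom). A polyomino is a finite set of cells; its size is its number of cells. For a polyomino $\mathcal{P}$ of size $n$ the board is $\mathbb{B} = \{C_{i,j} : 1 \le i,j \le n\}$. The shift of $\mathcal{P}$ by integers $(c,d)$ is $\mathcal{P}+(c,d) = \{C_{x+c,y+d} : C_{x,y} \in \mathcal{P}\}$. For positive integers $a,b$ and $T_{a,b} = \{C_{i,1} : 1 \le i \le 2a+1\} \cup \{C_{a+1,j} : 2 \le j \le b+1\}$, its rotations by $90^\circ,180^\circ,270^\circ$ clockwise are $TR_{a,b} = \{C_{b+1,i} : 1 \le i \le 2a+1\} \cup \{C_{j,a+1} : 1 \le j \le b\}$, $TR^2_{a,b} = \{C_{i,b+1} : 1 \le i \le 2a+1\} \cup \{C_{a+1,j} : 1 \le j \le b\}$, $TR^3_{a,b} = \{C_{1,i} : 1 \le i \le 2a+1\} \cup \{C_{j,a+1} : 2 \le j \le b+1\}$. A free copy of $T_{a,b}$ is any shift of one of these four. A set of polyominoes is a valid arrangement if each is contained in $\mathbb{B}$ and they are pairwise disjoint. A free packing of $\mathcal{P}$ is a set of free copies of $\mathcal{P}$ forming a valid arrangement such that adding any further free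 copy of $\mathcal{P}$ yields an invalid arrangement. The clumsy free packing number $\mathrm{cp}_{\mathrm{free}}(\mathcal{P})$ is the minimum number of polyominoes in a free packing of $\mathcal{P}$ on the $n \times n$ board. *)

theory Defs
  imports Main
begin

text \<open>A cell C_{i,j} (column i, row j) is represented by the pair (i, j) of integers.
  A polyomino is a finite set of cells.\<close>

type_synonym cell = "int \<times> int"
type_synonym polyomino = "cell set"

definition board :: "nat \<Rightarrow> polyomino" where
  "board n = {(i, j). 1 \<le> i \<and> i \<le> int n \<and> 1 \<le> j \<and> j \<le> int n}"

definition shift :: "polyomino \<Rightarrow> int \<Rightarrow> int \<Rightarrow> polyomino" where
  "shift P c d = {(x + c, y + d) | x y. (x, y) \<in> P}"

definition T :: "nat \<Rightarrow> nat \<Rightarrow> polyomino" where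
  "T a b = {(i, 1) | i. 1 \<le> i \<and> i \<le> 2 * int a + 1}
         \<union> {(int a + 1, j) | j. 2 \<le> j \<and> j \<le> int b + 1}"

definition TR :: "nat \<Rightarrow> nat \<Rightarrow> polyomino" where
  "TR a b = {(int b + 1, i) | i. 1 \<le> i \<and> i \<le> 2 * int a + 1}
          \<union> {(j, int a + 1) | j. 1 \<le> j \<and> j \<le> int b}"

definition TR2 :: "nat \<Rightarrow> nat \<Rightarrow> polyomino" where
  "TR2 a b = {(i, int b + 1) | i. 1 \<le> i \<and> i \<le> 2 * int a + 1}
           \<union> {(int a + 1, j) | j. 1 \<le> j \<and> j \<le> int b}"

definition TR3 :: "nat \<Rightarrow> nat \<Rightarrow> polyomino" where
  "TR3 a b = {(1, i) | i. 1 \<le> i \<and> i \<le> 2 * int a + 1}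
           \<union> {(j, int a + 1) | j. 2 \<le> j \<and> j \<le> int b + 1}"

text \<open>Free copies of T_{a,b}: shifts of any of the four rotations.\<close>
definition free_copy_T :: "nat \<Rightarrow> nat \<Rightarrow> polyomino \<Rightarrow> bool" where
  "free_copy_T a b Q \<longleftrightarrow>
     (\<exists>R \<in> {T a b, TR a b, TR2 a b, TR3 a b}. \<exists>c d. Q = shift R c d)"

definition valid_arrangement :: "nat \<Rightarrow> polyomino set \<Rightarrow> bool" where
  "valid_arrangement n S \<longleftrightarrow>
     (\<forall>P \<in> S. P \<subseteq> board n) \<and>
     (\<forall>P \<in> S. \<forall>Q \<in> S. P \<noteq> Q \<longrightarrow> P \<inter> Q = {})"

definition free_packing_T :: "nat \<Rightarrow> nat \<Rightarrow> nat \<Rightarrow> polyomino set \<Rightarrow> bool" where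
  "free_packing_T a b n S \<longleftrightarrow>
     (\<forall>P \<in> S. free_copy_T a b P) \<and> valid_arrangement n S \<and>
     (\<forall>Q. free_copy_T a b Q \<and> Q \<notin> S \<longrightarrow> \<not> valid_arrangement n (insert Q S))"

definition cp_free_T :: "nat \<Rightarrow> nat \<Rightarrow> nat" where
  "cp_free_T a b =
     (LEAST k. \<exists>S. free_packing_T a b (card (T a b)) S \<and> card S = k)"

end

theory Submission
  imports Defs
begin

(*
  A copy of T_{a,a} on the (3a+1) x (3a+1) board fills a (2a+1) x (a+1) box. One copy never
  blocks the board: unless its box lies in the middle band, a+1 whole rows (or columns) stay
  free for a parallel copy, and in the middle band a perpendicular copy fits along the free
  edge of the board.

  Two copies do block it: take the bars in row a (columns 1..2a+1) and in row 2a+1 (columns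
  a+1..3a+1), stems pointing down. A copy with a horizontal bar contains a vertical segment of
  a+1 cells (its stem and the bar cell below or above it) in a column between a+1 and 2a+1;
  such a segment meets row a or row 2a+1, where both bars cover these columns. A copy with a
  vertical bar has 2a+1 cells in one column, so it crosses row 2a+1, which settles the case of
  a column right of column a; further left the bar also crosses row a unless it starts in row
  a+1, and then its stem lies in row 2a+1 and reaches column a+1.
*)

lemma mem_shift: "(x, y) \<in> shift P c d \<longleftrightarrow> (x - c, y - d) \<in> P"
  unfolding shift_def by force

lemma mem_shift_T: "(x, y) \<in> shift (T a b) c d \<longleftrightarrow>
    (y = d + 1 \<and> c + 1 \<le> x \<and> x \<le> c + 2 * int a + 1) \<or>
    (x = c + int a + 1 \<and> d + 2 \<le> y \<and> y \<le> d + int b + 1)"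
  unfolding mem_shift T_def by auto

lemma mem_shift_TR: "(x, y) \<in> shift (TR a b) c d \<longleftrightarrow>
    (x = c + int b + 1 \<and> d + 1 \<le> y \<and> y \<le> d + 2 * int a + 1) \<or>
    (y = d + int a + 1 \<and> c + 1 \<le> x \<and> x \<le> c + int b)"
  unfolding mem_shift TR_def by auto

lemma mem_shift_TR2: "(x, y) \<in> shift (TR2 a b) c d \<longleftrightarrow>
    (y = d + int b + 1 \<and> c + 1 \<le> x \<and> x \<le> c + 2 * int a + 1) \<or>
    (x = c + int a + 1 \<and> d + 1 \<le> y \<and> y \<le> d + int b)"
  unfolding mem_shift TR2_def by auto

lemma mem_shift_TR3: "(x, y) \<in> shift (TR3 a b) c d \<longleftrightarrow>
    (x = c + 1 \<and> d + 1 \<le> y \<and> y \<le> d + 2 * int a + 1) \<or>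
    (y = d + int a + 1 \<and> c + 2 \<le> x \<and> x \<le> c + int b + 1)"
  unfolding mem_shift TR3_def by auto

lemmas mem_shift_rotations = mem_shift_T mem_shift_TR mem_shift_TR2 mem_shift_TR3

lemma card_T: "card (T a b) = 2 * a + b + 1"
proof -
  let ?bar = "(\<lambda>i. (i, 1)) ` {1..2 * int a + 1}"
    and ?stem = "(\<lambda>j. (int a + 1, j)) ` {2..int b + 1}"
  have "T a b = ?bar \<union> ?stem"
    unfolding T_def by auto
  moreover have "card ?bar = 2 * a + 1" "card ?stem = b"
    by (subst card_image; auto simp: inj_on_def)+
  moreover have "?bar \<inter> ?stem = {}"
    by auto
  ultimately show ?thesis
    by (simp add: card_Un_disjoint)
qed

lemma free_copy_TE:
  assumes "free_copy_T a b Q"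
  obtains (T) c d where "Q = shift (T a b) c d"
    | (TR) c d where "Q = shift (TR a b) c d"
    | (TR2) c d where "Q = shift (TR2 a b) c d"
    | (TR3) c d where "Q = shift (TR3 a b) c d"
  using assms unfolding free_copy_T_def by blast

lemma free_copy_T_shift [intro]:
  "free_copy_T a b (shift (T a b) c d)"
  "free_copy_T a b (shift (TR a b) c d)"
  "free_copy_T a b (shift (TR2 a b) c d)"
  "free_copy_T a b (shift (TR3 a b) c d)"
  unfolding free_copy_T_def by blast+

lemma free_copy_T_nonempty:
  assumes "free_copy_T a b Q"
  shows "Q \<noteq> {}"
  using assms
proof (cases rule: free_copy_TE)
  case (T c d)
  then have "(c + 1, d + 1) \<in> Q" by (simp add: mem_shift_T)
  then show ?thesis by blast
next
  case (TR c d)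
  then have "(c + int b + 1, d + 1) \<in> Q" by (simp add: mem_shift_TR)
  then show ?thesis by blast
next
  case (TR2 c d)
  then have "(c + 1, d + int b + 1) \<in> Q" by (simp add: mem_shift_TR2)
  then show ?thesis by blast
next
  case (TR3 c d)
  then have "(c + 1, d + 1) \<in> Q" by (simp add: mem_shift_TR3)
  then show ?thesis by blast
qed

lemma shift_T_subset_board_iff:
  "shift (T a b) c d \<subseteq> board n \<longleftrightarrow>
    0 \<le> c \<and> c + 2 * int a + 1 \<le> int n \<and> 0 \<le> d \<and> d + int b + 1 \<le> int n"
proof
  assume "shift (T a b) c d \<subseteq> board n"
  moreover have "(c + 1, d + 1) \<in> shift (T a b) c d"
    "(c + 2 * int a + 1, d + 1) \<in> shift (T a b) c d"
    "(c + int a + 1, d + int b + 1) \<in> shift (T a b) c d"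
    by (auto simp: mem_shift_T)
  ultimately show "0 \<le> c \<and> c + 2 * int a + 1 \<le> int n \<and> 0 \<le> d \<and> d + int b + 1 \<le> int n"
    by (auto simp: board_def)
qed (auto simp: board_def mem_shift_T)

lemma shift_TR_subset_board_iff:
  "shift (TR a b) c d \<subseteq> board n \<longleftrightarrow>
    0 \<le> c \<and> c + int b + 1 \<le> int n \<and> 0 \<le> d \<and> d + 2 * int a + 1 \<le> int n"
proof
  assume "shift (TR a b) c d \<subseteq> board n"
  moreover have "(c + int b + 1, d + 1) \<in> shift (TR a b) c d"
    "(c + int b + 1, d + 2 * int a + 1) \<in> shift (TR a b) c d"
    "(c + 1, d + int a + 1) \<in> shift (TR a b) c d \<or> b = 0"
    by (auto simp: mem_shift_TR)
  ultimately show "0 \<le> c \<and> c + int b + 1 \<le> int n \<and> 0 \<le> d \<and> d + 2 * int a + 1 \<le> int n"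
    by (auto simp: board_def)
qed (auto simp: board_def mem_shift_TR)

lemma shift_TR2_subset_board_iff:
  "shift (TR2 a b) c d \<subseteq> board n \<longleftrightarrow>
    0 \<le> c \<and> c + 2 * int a + 1 \<le> int n \<and> 0 \<le> d \<and> d + int b + 1 \<le> int n"
proof
  assume "shift (TR2 a b) c d \<subseteq> board n"
  moreover have "(c + 1, d + int b + 1) \<in> shift (TR2 a b) c d"
    "(c + 2 * int a + 1, d + int b + 1) \<in> shift (TR2 a b) c d"
    "(c + int a + 1, d + 1) \<in> shift (TR2 a b) c d \<or> b = 0"
    by (auto simp: mem_shift_TR2)
  ultimately show "0 \<le> c \<and> c + 2 * int a + 1 \<le> int n \<and> 0 \<le> d \<and> d + int b + 1 \<le> int n"
    by (auto simp: board_def)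
qed (auto simp: board_def mem_shift_TR2)

lemma shift_TR3_subset_board_iff:
  "shift (TR3 a b) c d \<subseteq> board n \<longleftrightarrow>
    0 \<le> c \<and> c + int b + 1 \<le> int n \<and> 0 \<le> d \<and> d + 2 * int a + 1 \<le> int n"
proof
  assume "shift (TR3 a b) c d \<subseteq> board n"
  moreover have "(c + 1, d + 1) \<in> shift (TR3 a b) c d"
    "(c + 1, d + 2 * int a + 1) \<in> shift (TR3 a b) c d"
    "(c + int b + 1, d + int a + 1) \<in> shift (TR3 a b) c d \<or> b = 0"
    by (auto simp: mem_shift_TR3)
  ultimately show "0 \<le> c \<and> c + int b + 1 \<le> int n \<and> 0 \<le> d \<and> d + 2 * int a + 1 \<le> int n"
    by (auto simp: board_def)
qed (auto simp: board_def mem_shift_TR3)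

lemmas shift_rotation_subset_board_iff =
  shift_T_subset_board_iff shift_TR_subset_board_iff
  shift_TR2_subset_board_iff shift_TR3_subset_board_iff

lemma finite_board: "finite (board n)"
proof (rule finite_subset)
  show "board n \<subseteq> {1..int n} \<times> {1..int n}"
    unfolding board_def by auto
qed simp

lemma empty_not_free_packing_T:
  assumes "free_copy_T a b Q" and "Q \<subseteq> board n"
  shows "\<not> free_packing_T a b n {}"
  using assms unfolding free_packing_T_def valid_arrangement_def by auto

lemma singleton_not_free_packing_T:
  assumes "free_copy_T a b P" and "P \<subseteq> board n"
    and "free_copy_T a b Q" and "Q \<subseteq> board n" and "P \<inter> Q = {}"
  shows "\<not> free_packing_T a b n {P}"
proof -
  have "Q \<noteq> P"
    using \<open>P \<inter> Q = {}\<close> free_copy_T_nonempty[OF \<open>free_copy_T a b Q\<close>] by blast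
  moreover have "valid_arrangement n {Q, P}"
    using assms unfolding valid_arrangement_def by auto
  ultimately show ?thesis
    using \<open>free_copy_T a b Q\<close> unfolding free_packing_T_def by auto
qed

lemma two_le_card_free_packing_T:
  assumes some_copy: "free_copy_T a b Q\<^sub>0" "Q\<^sub>0 \<subseteq> board n"
    and disjoint_copy: "\<And>P. free_copy_T a b P \<Longrightarrow> P \<subseteq> board n \<Longrightarrow>
      \<exists>Q. free_copy_T a b Q \<and> Q \<subseteq> board n \<and> P \<inter> Q = {}"
    and S: "free_packing_T a b n S"
  shows "2 \<le> card S"
proof (rule ccontr)
  assume "\<not> 2 \<le> card S"
  moreover have "finite S"
  proof (rule finite_subset)
    show "S \<subseteq> Pow (board n)"
      using S unfolding free_packing_T_def valid_arrangement_def by auto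
  qed (simp add: finite_board)
  ultimately consider "S = {}" | P where "S = {P}"
    by (auto simp: not_le less_2_cases_iff card_1_singleton_iff)
  then show False
  proof cases
    case 1
    then show False
      using S empty_not_free_packing_T[OF some_copy] by simp
  next
    case (2 P)
    then have "free_copy_T a b P" "P \<subseteq> board n"
      using S unfolding free_packing_T_def valid_arrangement_def by auto
    with disjoint_copy obtain Q where "free_copy_T a b Q" "Q \<subseteq> board n" "P \<inter> Q = {}"
      by blast
    then show False
      using S 2 singleton_not_free_packing_T \<open>free_copy_T a b P\<close> \<open>P \<subseteq> board n\<close> by blast
  qed
qed

lemma pair_free_packing_T:
  assumes "free_copy_T a b P\<^sub>1" "P\<^sub>1 \<subseteq> board n" "free_copy_T a b P\<^sub>2" "P\<^sub>2 \<subseteq> board n"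
    and "P\<^sub>1 \<inter> P\<^sub>2 = {}"
    and blocked: "\<And>Q. free_copy_T a b Q \<Longrightarrow> Q \<subseteq> board n \<Longrightarrow> Q \<inter> (P\<^sub>1 \<union> P\<^sub>2) \<noteq> {}"
  shows "free_packing_T a b n {P\<^sub>1, P\<^sub>2}"
  unfolding free_packing_T_def
proof (intro conjI allI impI)
  show "valid_arrangement n {P\<^sub>1, P\<^sub>2}"
    using assms unfolding valid_arrangement_def by auto
  fix Q
  assume Q: "free_copy_T a b Q \<and> Q \<notin> {P\<^sub>1, P\<^sub>2}"
  show "\<not> valid_arrangement n (insert Q {P\<^sub>1, P\<^sub>2})"
  proof
    assume "valid_arrangement n (insert Q {P\<^sub>1, P\<^sub>2})"
    then have "Q \<subseteq> board n" "Q \<inter> (P\<^sub>1 \<union> P\<^sub>2) = {}"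
      using Q unfolding valid_arrangement_def by auto
    then show False
      using blocked Q by blast
  qed
qed (use assms in auto)

lemma exists_disjoint_copy_horizontal:
  assumes "a \<ge> 1" and R: "R \<in> {T a a, TR2 a a}" and "shift R c d \<subseteq> board (3 * a + 1)"
  shows "\<exists>Q. free_copy_T a a Q \<and> Q \<subseteq> board (3 * a + 1) \<and> shift R c d \<inter> Q = {}"
proof -
  note shift_rotation_subset_board_iff [simp] mem_shift_rotations [simp]
  have box: "0 \<le> c" "c \<le> int a" "0 \<le> d" "d \<le> 2 * int a"
    using assms by auto
  consider (top) "d \<ge> int a + 1" | (bottom) "d \<le> int a - 1"
    | (left_T) "d = int a" "c \<ge> 1" "R = T a a" | (left_TR2) "d = int a" "c \<ge> 1" "R = TR2 a a"
    | (right_T) "d = int a" "c = 0" "R = T a a" | (right_TR2) "d = int a" "c = 0" "R = TR2 a a"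
    using R box by atomize_elim auto
  then show ?thesis
  proof cases
    case top
    show ?thesis
      using top box R by (intro exI[of _ "shift (T a a) 0 0"]) auto
  next
    case bottom
    show ?thesis
      using bottom box R by (intro exI[of _ "shift (T a a) 0 (2 * int a)"]) auto
  next
    case left_T
    show ?thesis
      using left_T box \<open>a \<ge> 1\<close> by (intro exI[of _ "shift (TR3 a a) 0 1"]) auto
  next
    case left_TR2
    show ?thesis
      using left_TR2 box \<open>a \<ge> 1\<close> by (intro exI[of _ "shift (TR3 a a) 0 0"]) auto
  next
    case right_T
    show ?thesis
      using right_T box \<open>a \<ge> 1\<close> by (intro exI[of _ "shift (TR a a) (2 * int a) 1"]) auto
  next
    case right_TR2
    show ?thesis
      using right_TR2 box \<open>a \<ge> 1\<close> by (intro exI[of _ "shift (TR a a) (2 * int a) 0"]) auto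
  qed
qed

lemma exists_disjoint_copy_vertical:
  assumes "a \<ge> 1" and R: "R \<in> {TR a a, TR3 a a}" and "shift R c d \<subseteq> board (3 * a + 1)"
  shows "\<exists>Q. free_copy_T a a Q \<and> Q \<subseteq> board (3 * a + 1) \<and> shift R c d \<inter> Q = {}"
proof -
  note shift_rotation_subset_board_iff [simp] mem_shift_rotations [simp]
  have box: "0 \<le> c" "c \<le> 2 * int a" "0 \<le> d" "d \<le> int a"
    using assms by auto
  consider (left) "c \<ge> int a + 1" | (right) "c \<le> int a - 1"
    | (top_TR) "c = int a" "d \<ge> 1" "R = TR a a" | (top_TR3) "c = int a" "d \<ge> 1" "R = TR3 a a"
    | (bottom_TR) "c = int a" "d = 0" "R = TR a a" | (bottom_TR3) "c = int a" "d = 0" "R = TR3 a a"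
    using R box by atomize_elim auto
  then show ?thesis
  proof cases
    case left
    show ?thesis
      using left box R by (intro exI[of _ "shift (TR3 a a) 0 0"]) auto
  next
    case right
    show ?thesis
      using right box R by (intro exI[of _ "shift (TR3 a a) (2 * int a) 0"]) auto
  next
    case top_TR
    show ?thesis
      using top_TR box \<open>a \<ge> 1\<close> by (intro exI[of _ "shift (T a a) 0 0"]) auto
  next
    case top_TR3
    show ?thesis
      using top_TR3 box \<open>a \<ge> 1\<close> by (intro exI[of _ "shift (T a a) 1 0"]) auto
  next
    case bottom_TR
    show ?thesis
      using bottom_TR box \<open>a \<ge> 1\<close> by (intro exI[of _ "shift (TR2 a a) 0 (2 * int a)"]) auto
  next
    case bottom_TR3
    show ?thesis
      using bottom_TR3 box \<open>a \<ge> 1\<close> by (intro exI[of _ "shift (TR2 a a) 1 (2 * int a)"]) auto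
  qed
qed

lemma exists_disjoint_copy:
  assumes "a \<ge> 1" and "free_copy_T a a P" and "P \<subseteq> board (3 * a + 1)"
  shows "\<exists>Q. free_copy_T a a Q \<and> Q \<subseteq> board (3 * a + 1) \<and> P \<inter> Q = {}"
  using assms(2)
proof (cases rule: free_copy_TE)
  case (T c d)
  then show ?thesis using exists_disjoint_copy_horizontal[of a "T a a" c d] assms by simp
next
  case (TR c d)
  then show ?thesis using exists_disjoint_copy_vertical[of a "TR a a" c d] assms by simp
next
  case (TR2 c d)
  then show ?thesis using exists_disjoint_copy_horizontal[of a "TR2 a a" c d] assms by simp
next
  case (TR3 c d)
  then show ?thesis using exists_disjoint_copy_vertical[of a "TR3 a a" c d] assms by simp
qed

definition upper_T :: "nat \<Rightarrow> polyomino" where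
  "upper_T a = shift (T a a) 0 (int a - 1)"

definition lower_T :: "nat \<Rightarrow> polyomino" where
  "lower_T a = shift (T a a) (int a) (2 * int a)"

lemma copy_meets_upper_T_or_lower_T:
  assumes "a \<ge> 1" and Q: "free_copy_T a a Q" "Q \<subseteq> board (3 * a + 1)"
  shows "Q \<inter> (upper_T a \<union> lower_T a) \<noteq> {}"
  using Q(1)
proof (cases rule: free_copy_TE)
  case (T c d)
  with Q(2) have "0 \<le> c" "c \<le> int a" "0 \<le> d" "d \<le> 2 * int a"
    by (auto simp: shift_T_subset_board_iff)
  then have "(c + int a + 1, if d < int a then int a else 2 * int a + 1) \<in> Q \<inter> (upper_T a \<union> lower_T a)"
    using T \<open>a \<ge> 1\<close> by (auto simp: upper_T_def lower_T_def mem_shift_rotations)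
  then show ?thesis by blast
next
  case (TR c d)
  with Q(2) have "0 \<le> c" "c \<le> 2 * int a" "0 \<le> d" "d \<le> int a"
    by (auto simp: shift_TR_subset_board_iff)
  then have "(c + int a + 1, 2 * int a + 1) \<in> Q \<inter> (upper_T a \<union> lower_T a)"
    using TR by (auto simp: upper_T_def lower_T_def mem_shift_rotations)
  then show ?thesis by blast
next
  case (TR2 c d)
  with Q(2) have "0 \<le> c" "c \<le> int a" "0 \<le> d" "d \<le> 2 * int a"
    by (auto simp: shift_TR2_subset_board_iff)
  then have "(c + int a + 1, if d < int a then int a else 2 * int a + 1) \<in> Q \<inter> (upper_T a \<union> lower_T a)"
    using TR2 \<open>a \<ge> 1\<close> by (auto simp: upper_T_def lower_T_def mem_shift_rotations)
  then show ?thesis by blast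
next
  case (TR3 c d)
  with Q(2) have "0 \<le> c" "c \<le> 2 * int a" "0 \<le> d" "d \<le> int a"
    by (auto simp: shift_TR3_subset_board_iff)
  then have "(if c \<ge> int a then (c + 1, 2 * int a + 1) else if d < int a then (c + 1, int a)
      else (int a + 1, 2 * int a + 1)) \<in> Q \<inter> (upper_T a \<union> lower_T a)"
    using TR3 \<open>a \<ge> 1\<close> by (auto simp: upper_T_def lower_T_def mem_shift_rotations)
  then show ?thesis by blast
qed

theorem theorem8:
  fixes a :: nat
  assumes "a \<ge> 1"
  shows "card (T a a) = 3 * a + 1 \<and> cp_free_T a a = 2"
proof -
  have fits: "upper_T a \<subseteq> board (3 * a + 1)" "lower_T a \<subseteq> board (3 * a + 1)"
    and disjoint: "upper_T a \<inter> lower_T a = {}"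
    using assms by (auto simp: upper_T_def lower_T_def shift_T_subset_board_iff mem_shift_T)
  have copies: "free_copy_T a a (upper_T a)" "free_copy_T a a (lower_T a)"
    unfolding upper_T_def lower_T_def by blast+
  have packing: "free_packing_T a a (3 * a + 1) {upper_T a, lower_T a}"
    using pair_free_packing_T[OF copies(1) fits(1) copies(2) fits(2) disjoint]
      copy_meets_upper_T_or_lower_T[OF assms] by blast
  have "card {upper_T a, lower_T a} = 2"
    using disjoint free_copy_T_nonempty[OF copies(1)] by (auto simp: card_insert_if)
  moreover have "2 \<le> card S" if "free_packing_T a a (3 * a + 1) S" for S
    using two_le_card_free_packing_T[OF copies(1) fits(1) exists_disjoint_copy[OF assms] that] .
  ultimately have "cp_free_T a a = 2"
    unfolding cp_free_T_def card_T using packing by (intro Least_equality) auto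
  then show ?thesis
    by (simp add: card_T)
qed

end
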